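(* Let $(\boldsymbol{x}^1,\boldsymbol{x}^2)\in(\mathbb{T}^3\times\mathbb{T}^3)\setminus\Delta$ with $\boldsymbol{x}^j=(x^j,y^j,z^j)$, and assume $x^1-x^2=0$ and $y^1-y^2=0$. For $\omega_1,\omega_2,\dots\in\Omega_0$ set $\boldsymbol{x}^j_0=\boldsymbol{x}^j$ and $\boldsymbol{x}^j_n=f_{\omega_n}(\boldsymbol{x}^j_{n-1})$, $j=1,2$. Then for any $\varepsilon>0$ and any $\overline{\boldsymbol{x}}\in\mathbb{T}^3$ there exist $N_2\in\mathbb{N}$ and $(\omega_1,\dots,\omega_{N_2})\in\Omega_0^{N_2}$ such that $$\mathrm{dist}_{\mathbb{T}^3}(\boldsymbol{x}^1_{N_2},\overline{\boldsymbol{x}})<\varepsilon\qquad\text{and}\qquad \mathrm{dist}_{\mathbb{T}^3}(\overline{\boldsymbol{x}},\boldsymbol{x}^2_{N_2})=\mathrm{dist}_{\mathbb{T}^3}(\boldsymbol{x}^1,\boldsymbol{x}^2).$$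
   Context: $\mathbb{T}^3=\mathbb{R}^3/(2\pi\mathbb{Z})^3$ with its standard flat distance $\mathrm{dist}_{\mathbb{T}^3}$; $\Delta=\{(\boldsymbol{x}^1,\boldsymbol{x}^2):\boldsymbol{x}^1=\boldsymbol{x}^2\}$. Fix $U>0$ and let $\Omega_0=[-U,U]^3\times[0,2\pi)^3$, with elements $\omega=(\mathsf{A},\mathsf{B},\mathsf{C},\alpha,\beta,\gamma)$. Define maps of $\mathbb{T}^3$: $f_{(\mathsf{A},\alpha)}(x,y,z)=(x+\mathsf{A}\sin(z+\alpha),\ y+\mathsf{A}\cos(z+\alpha),\ z)$, $f_{(\mathsf{B},\beta)}(x,y,z)=(x,\ y+\mathsf{B}\sin(x+\beta),\ z+\mathsf{B}\cos(x+\beta))$, $f_{(\mathsf{C},\gamma)}(x,y,z)=(x+\mathsf{C}\cos(y+\gamma),\ y,\ z+\mathsf{C}\sin(y+\gamma))$, and $f_\omega=f_{(\mathsf{C},\gamma)}\circ f_{(\mathsf{B},\beta)}\circ f_{(\mathsf{A},\alpha)}$. *)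

theory Defs
  imports "HOL-Analysis.Analysis"
begin

text \<open>Points of the torus T^3 = R^3/(2 pi Z)^3 are represented by real
representatives (x,y,z). All notions below are invariant under changing
representatives by multiples of 2 pi in each coordinate.\<close>

type_synonym pt3 = "real \<times> real \<times> real"

definition circ_dist :: "real \<Rightarrow> real \<Rightarrow> real" where
  "circ_dist a b = (INF k::int. \<bar>a - b - 2 * pi * of_int k\<bar>)"

definition torus_dist :: "pt3 \<Rightarrow> pt3 \<Rightarrow> real" where
  "torus_dist p q = (case p of (x1, y1, z1) \<Rightarrow> case q of (x2, y2, z2) \<Rightarrow>
      sqrt ((circ_dist x1 x2)\<^sup>2 + (circ_dist y1 y2)\<^sup>2 + (circ_dist z1 z2)\<^sup>2))"

definition circ_eq :: "real \<Rightarrow> real \<Rightarrow> bool" where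
  "circ_eq a b \<longleftrightarrow> (\<exists>k::int. a - b = 2 * pi * of_int k)"

definition torus_eq :: "pt3 \<Rightarrow> pt3 \<Rightarrow> bool" where
  "torus_eq p q = (case p of (x1, y1, z1) \<Rightarrow> case q of (x2, y2, z2) \<Rightarrow>
      circ_eq x1 x2 \<and> circ_eq y1 y2 \<and> circ_eq z1 z2)"

type_synonym param = "real \<times> real \<times> real \<times> real \<times> real \<times> real"

definition Omega0 :: "real \<Rightarrow> param set" where
  "Omega0 U = {-U..U} \<times> {-U..U} \<times> {-U..U} \<times> {0..<2*pi} \<times> {0..<2*pi} \<times> {0..<2*pi}"

definition fA :: "real \<Rightarrow> real \<Rightarrow> pt3 \<Rightarrow> pt3" where
  "fA A \<alpha> p = (case p of (x, y, z) \<Rightarrow> (x + A * sin (z + \<alpha>), y + A * cos (z + \<alpha>), z))"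

definition fB :: "real \<Rightarrow> real \<Rightarrow> pt3 \<Rightarrow> pt3" where
  "fB B \<beta> p = (case p of (x, y, z) \<Rightarrow> (x, y + B * sin (x + \<beta>), z + B * cos (x + \<beta>)))"

definition fC :: "real \<Rightarrow> real \<Rightarrow> pt3 \<Rightarrow> pt3" where
  "fC C \<gamma> p = (case p of (x, y, z) \<Rightarrow> (x + C * cos (y + \<gamma>), y, z + C * sin (y + \<gamma>)))"

definition f_omega :: "param \<Rightarrow> pt3 \<Rightarrow> pt3" where
  "f_omega \<omega> = (case \<omega> of (A, B, C, \<alpha>, \<beta>, \<gamma>) \<Rightarrow> fC C \<gamma> \<circ> fB B \<beta> \<circ> fA A \<alpha>)"

text \<open>Orbit: x_0 = x, x_n = f_{omega_n}(x_{n-1}); omega is indexed from 1.\<close>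
primrec orbit :: "(nat \<Rightarrow> param) \<Rightarrow> nat \<Rightarrow> pt3 \<Rightarrow> pt3" where
  "orbit \<omega> 0 p = p"
| "orbit \<omega> (Suc n) p = f_omega (\<omega> (Suc n)) (orbit \<omega> n p)"

end

theory Submission
  imports Defs
begin

(* With A = 0, one map f_omega acts on a whole vertical circle {x = x0, y = y0} of T^3 as the
   translation by any prescribed vector (a, b, c) of length at most U: writing
   (b, c) = B (sin t, cos t), the phase beta makes f_B add (0, b, c) on that circle, and the
   phase gamma makes f_C add (a, 0, 0) there. Translations permute vertical circles, so
   iterating such maps moves both points, which share a vertical circle, by one and the same
   vector; choosing it as xbar - x^1 sends x^1 exactly to xbar and keeps the distance to the
   image of x^2. The points need not be distinct. *)

lemma circ_eq_refl: "circ_eq u u"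
  unfolding circ_eq_def by (rule exI[of _ 0]) simp

lemma circ_eq_sym: "circ_eq u v \<Longrightarrow> circ_eq v u"
  unfolding circ_eq_def by (metis minus_diff_eq mult_minus_right of_int_minus)

lemma circ_eq_add: "circ_eq u v \<Longrightarrow> circ_eq u' v' \<Longrightarrow> circ_eq (u + u') (v + v')"
  unfolding circ_eq_def by (metis (no_types, opaque_lifting) add_diff_add distrib_left of_int_add)

lemma circ_eq_sin_eq: "circ_eq u v \<Longrightarrow> sin u = sin v"
  unfolding circ_eq_def by (auto simp: diff_eq_eq sin_add)

lemma circ_eq_cos_eq: "circ_eq u v \<Longrightarrow> cos u = cos v"
  unfolding circ_eq_def by (auto simp: diff_eq_eq cos_add)

lemma circ_eq_representative: "\<exists>\<beta>\<in>{0..<2*pi}. circ_eq \<beta> s"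
proof
  let ?k = "\<lfloor>s / (2*pi)\<rfloor>"
  have "2*pi * of_int ?k \<le> s" "s < 2*pi * (of_int ?k + 1)"
    using floor_divide_lower[of "2*pi" s] floor_divide_upper[of "2*pi" s] by (simp_all add: algebra_simps)
  then show "s - 2*pi * of_int ?k \<in> {0..<2*pi}" by (simp add: algebra_simps)
  show "circ_eq (s - 2*pi * of_int ?k) s"
    unfolding circ_eq_def by (rule exI[of _ "- ?k"]) simp
qed

lemma circ_dist_self: "circ_dist u u = 0"
  unfolding circ_dist_def by (rule cInf_eq_minimum[of 0]) (auto intro: range_eqI[of _ _ 0])

lemma circ_dist_add_right: "circ_dist (u + d) (v + d) = circ_dist u v"
  unfolding circ_dist_def by simp

lemma torus_dist_self: "torus_dist p p = 0"
  by (cases p) (simp add: torus_dist_def circ_dist_self)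

lemma torus_dist_add_right: "torus_dist (p + d) (q + d) = torus_dist p q"
  by (cases p, cases q, cases d) (simp add: torus_dist_def circ_dist_add_right)

definition same_xy :: "pt3 \<Rightarrow> pt3 \<Rightarrow> bool" where
  "same_xy p q \<longleftrightarrow> circ_eq (fst p) (fst q) \<and> circ_eq (fst (snd p)) (fst (snd q))"

lemma same_xy_add_right: "same_xy p q \<Longrightarrow> same_xy (p + d) (q + d)"
  unfolding same_xy_def by (simp add: circ_eq_add circ_eq_refl)

lemma norm_pt3: "norm ((a, b, c) :: pt3) = sqrt (a\<^sup>2 + b\<^sup>2 + c\<^sup>2)"
  by (simp add: norm_Pair)

lemma f_omega_translates_fibre:
  assumes "norm d \<le> U"
  shows "\<exists>\<omega>\<in>Omega0 U. \<forall>q. same_xy p q \<longrightarrow> f_omega \<omega> q = q + d"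
proof -
  obtain a b c where d: "d = (a, b, c)" by (cases d) auto
  obtain x y z where p: "p = (x, y, z)" by (cases p) auto
  define B where "B = cmod (Complex c b)"
  define t where "t = Arg2pi (Complex c b)"
  have polar: "B * sin t = b" "B * cos t = c"
    unfolding B_def t_def using sin_Arg2pi cos_Arg2pi by simp_all
  have "\<bar>a\<bar> \<le> norm d" "B \<le> norm d"
    unfolding d norm_pt3 B_def complex_norm
    by (simp_all add: real_sqrt_le_mono flip: real_sqrt_abs)
  then have bounds: "\<bar>a\<bar> \<le> U" "0 \<le> B" "B \<le> U" "0 \<le> U"
    using assms by (simp_all add: B_def)
  obtain \<beta> where \<beta>: "\<beta> \<in> {0..<2*pi}" "circ_eq \<beta> (t - x)"
    using circ_eq_representative by blast
  obtain \<gamma> where \<gamma>: "\<gamma> \<in> {0..<2*pi}" "circ_eq \<gamma> (- (y + b))"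
    using circ_eq_representative by blast
  let ?\<omega> = "(0, B, a, 0, \<beta>, \<gamma>)"
  have "?\<omega> \<in> Omega0 U"
    unfolding Omega0_def using bounds \<beta>(1) \<gamma>(1) by auto
  moreover have "f_omega ?\<omega> q = q + d" if "same_xy p q" for q
  proof -
    obtain x' y' z' where q: "q = (x', y', z')" by (cases q) auto
    have "circ_eq x' x" "circ_eq y' y"
      using that unfolding p q same_xy_def by (simp_all add: circ_eq_sym)
    then have "circ_eq (x' + \<beta>) (x + (t - x))" "circ_eq (y' + b + \<gamma>) (y + b + - (y + b))"
      using \<beta>(2) \<gamma>(2) by (blast intro: circ_eq_add circ_eq_refl)+
    then have "sin (x' + \<beta>) = sin t" "cos (x' + \<beta>) = cos t"
      "sin (y' + b + \<gamma>) = 0" "cos (y' + b + \<gamma>) = 1"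
      by (simp_all add: circ_eq_sin_eq circ_eq_cos_eq)
    then show ?thesis
      unfolding q d f_omega_def fA_def fB_def fC_def using polar by simp
  qed
  ultimately show ?thesis by blast
qed

lemma orbit_translates_fibre:
  assumes "norm e \<le> U"
  shows "\<exists>\<omega>. (\<forall>i. \<omega> i \<in> Omega0 U) \<and> (\<forall>n q. same_xy p q \<longrightarrow> orbit \<omega> n q = q + real n *\<^sub>R e)"
proof -
  have "\<forall>k. \<exists>w\<in>Omega0 U. \<forall>q. same_xy (p + real k *\<^sub>R e) q \<longrightarrow> f_omega w q = q + e"
    using f_omega_translates_fibre[OF assms] by (intro allI)
  then obtain W where W: "\<And>k. W k \<in> Omega0 U"
    "\<And>k q. same_xy (p + real k *\<^sub>R e) q \<Longrightarrow> f_omega (W k) q = q + e"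
    unfolding Bex_def choice_iff by blast
  define \<omega> where "\<omega> k = W (k - 1)" for k
  have "\<forall>i. \<omega> i \<in> Omega0 U"
    using W(1) by (simp add: \<omega>_def)
  moreover have "orbit \<omega> n q = q + real n *\<^sub>R e" if "same_xy p q" for n q
  proof (induction n)
    case (Suc n)
    have "same_xy (p + real n *\<^sub>R e) (q + real n *\<^sub>R e)"
      using that by (rule same_xy_add_right)
    then show ?case
      using Suc.IH W(2) by (simp add: \<omega>_def algebra_simps)
  qed simp
  ultimately show ?thesis
    by blast
qed

theorem lemma3p8:
  fixes U :: real and x1 y1 z1 x2 y2 z2 :: real
  assumes "U > 0"
    and "\<not> torus_eq (x1, y1, z1) (x2, y2, z2)"
    and "circ_eq x1 x2" and "circ_eq y1 y2"
  shows "\<forall>\<epsilon>>0. \<forall>xbar :: pt3. \<exists>N::nat. \<exists>\<omega>::nat \<Rightarrow> param.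
           (\<forall>i\<in>{1..N}. \<omega> i \<in> Omega0 U) \<and>
           torus_dist (orbit \<omega> N (x1, y1, z1)) xbar < \<epsilon> \<and>
           torus_dist xbar (orbit \<omega> N (x2, y2, z2)) = torus_dist (x1, y1, z1) (x2, y2, z2)"
proof (intro allI impI)
  fix \<epsilon> :: real and xbar :: pt3
  assume "\<epsilon> > 0"
  define d where "d = xbar - (x1, y1, z1)"
  obtain N :: nat where N: "norm d / U < N"
    using reals_Archimedean2 by blast
  have "0 \<le> norm d / U"
    using \<open>U > 0\<close> by simp
  with N have "N > 0"
    by linarith
  then have "norm (d /\<^sub>R real N) \<le> U"
    using N \<open>U > 0\<close> by (simp add: field_simps)
  then obtain \<omega> where \<omega>: "\<forall>i. \<omega> i \<in> Omega0 U"
    "\<forall>n q. same_xy (x1, y1, z1) q \<longrightarrow> orbit \<omega> n q = q + real n *\<^sub>R (d /\<^sub>R real N)"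
    using orbit_translates_fibre by blast
  have "same_xy (x1, y1, z1) (x1, y1, z1)" "same_xy (x1, y1, z1) (x2, y2, z2)"
    using assms(3,4) by (simp_all add: same_xy_def circ_eq_refl)
  then have on_target: "orbit \<omega> N (x1, y1, z1) = (x1, y1, z1) + d"
    and translated: "orbit \<omega> N (x2, y2, z2) = (x2, y2, z2) + d"
    using \<omega>(2) \<open>N > 0\<close> by simp_all
  have xbar: "xbar = (x1, y1, z1) + d"
    by (simp add: d_def)
  have "torus_dist (orbit \<omega> N (x1, y1, z1)) xbar < \<epsilon>"
    using \<open>\<epsilon> > 0\<close> by (simp add: on_target xbar torus_dist_self)
  moreover have "torus_dist xbar (orbit \<omega> N (x2, y2, z2)) = torus_dist (x1, y1, z1) (x2, y2, z2)"
    by (simp only: translated xbar torus_dist_add_right)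
  ultimately show "\<exists>N \<omega>. (\<forall>i\<in>{1..N}. \<omega> i \<in> Omega0 U) \<and>
           torus_dist (orbit \<omega> N (x1, y1, z1)) xbar < \<epsilon> \<and>
           torus_dist xbar (orbit \<omega> N (x2, y2, z2)) = torus_dist (x1, y1, z1) (x2, y2, z2)"
    using \<omega>(1) by blast
qed

end
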